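(* Let $c$ be a minimal-cellular cubic coordinate of size $n$ and let $i\in[n-1]$. If $c'=\uparrow_{i+1}(\uparrow_{i+2}(\cdots(\uparrow_{n-1}(c))\cdots))$ is well-defined (for $i=n-1$ this is $c'=c$), then $\uparrow_i(c')$ is well-defined.
   Context: A Tamari diagram of size $n$ is a word $u=u_1\cdots u_n$ of integers with $0\leq u_i\leq n-i$ and $u_{i+j}\leq u_i-j$ for all $i\in[n]$, $0\leq j\leq u_i$. A dual Tamari diagram of size $n$ is a word $v$ of integers with $0\leq v_i\leq i-1$ and $v_{i-j}\leq v_i-j$ for all $i\in[n]$, $0\leq j\leq v_i$. $(u,v)$ is a Tamari interval diagram if moreover for all $1\leq i<j\leq n$ with $j-i\leq u_i$ one has $v_j<j-i$. A cubic coordinate of size $n$ is $c\in\mathbb{Z}^{n-1}$ such that $(u,v)$ with $u_i=\max(c_i,0)$ ($i\in[n-1]$), $u_n=0$, $v_1=0$, $v_i=|\min(c_{i-1},0)|$ ($2\leq i\leq n$) is a Tamari interval diagram. For a cubic coordinate $c$ and $i\in[n-1]$, the minimal increase $\uparrow_i(c)$ is well-defined when there exists a cubic coordinate agreeing with $c$ outside position $i$ and with $i$-th entry $>c_i$; then $\uparrow_i(c)$ is obtained from $c$ by replacing $c_i$ by the smallest integer $t>c_i$ such that the result is a cubic coordinate (equivalently, it covers $c$ in the componentwise order and differs from $c$ only at position $i$). $c$ is minimal-cellular if $\uparrow_i(c)$ is well-defined for every $i\in[n-1]$. *)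

theory Defs
  imports Main
begin

(* Words are functions nat => int, read 1-indexed on positions 1..n. *)

definition tamari_diagram :: "nat \<Rightarrow> (nat \<Rightarrow> int) \<Rightarrow> bool" where
  "tamari_diagram n u \<longleftrightarrow>
     (\<forall>i\<in>{1..n}. 0 \<le> u i \<and> u i \<le> int n - int i) \<and>
     (\<forall>i\<in>{1..n}. \<forall>j::nat. int j \<le> u i \<longrightarrow> u (i + j) \<le> u i - int j)"

definition dual_tamari_diagram :: "nat \<Rightarrow> (nat \<Rightarrow> int) \<Rightarrow> bool" where
  "dual_tamari_diagram n v \<longleftrightarrow>
     (\<forall>i\<in>{1..n}. 0 \<le> v i \<and> v i \<le> int i - 1) \<and>
     (\<forall>i\<in>{1..n}. \<forall>j::nat. int j \<le> v i \<longrightarrow> v (i - j) \<le> v i - int j)"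

definition tamari_interval_diagram :: "nat \<Rightarrow> (nat \<Rightarrow> int) \<Rightarrow> (nat \<Rightarrow> int) \<Rightarrow> bool" where
  "tamari_interval_diagram n u v \<longleftrightarrow>
     tamari_diagram n u \<and> dual_tamari_diagram n v \<and>
     (\<forall>i j. 1 \<le> i \<and> i < j \<and> j \<le> n \<and> int (j - i) \<le> u i \<longrightarrow> v j < int (j - i))"

(* A cubic coordinate c = (c_1,...,c_{n-1}) is stored as a list; c_k = c ! (k - 1). *)
definition u_of :: "nat \<Rightarrow> int list \<Rightarrow> nat \<Rightarrow> int" where
  "u_of n c i = (if 1 \<le> i \<and> i \<le> n - 1 then max (c ! (i - 1)) 0 else 0)"

definition v_of :: "nat \<Rightarrow> int list \<Rightarrow> nat \<Rightarrow> int" where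
  "v_of n c i = (if 2 \<le> i \<and> i \<le> n then \<bar>min (c ! (i - 2)) 0\<bar> else 0)"

definition cubic_coordinate :: "nat \<Rightarrow> int list \<Rightarrow> bool" where
  "cubic_coordinate n c \<longleftrightarrow> 1 \<le> n \<and> length c = n - 1 \<and>
     tamari_interval_diagram n (u_of n c) (v_of n c)"

definition up_defined :: "nat \<Rightarrow> int list \<Rightarrow> nat \<Rightarrow> bool" where
  "up_defined n c i \<longleftrightarrow> (\<exists>t. t > c ! (i - 1) \<and> cubic_coordinate n (c[i - 1 := t]))"

definition up :: "nat \<Rightarrow> int list \<Rightarrow> nat \<Rightarrow> int list" where
  "up n c i = c[i - 1 := (LEAST t. t > c ! (i - 1) \<and> cubic_coordinate n (c[i - 1 := t]))]"

definition up_opt :: "nat \<Rightarrow> int list \<Rightarrow> nat \<Rightarrow> int list option" where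
  "up_opt n c i = (if up_defined n c i then Some (up n c i) else None)"

definition minimal_cellular :: "nat \<Rightarrow> int list \<Rightarrow> bool" where
  "minimal_cellular n c \<longleftrightarrow> cubic_coordinate n c \<and> (\<forall>i\<in>{1..n - 1}. up_defined n c i)"

(* up_chain n c i = \<up>_{i+1}(\<up>_{i+2}(...\<up>_{n-1}(c)...)): applies \<up>_{n-1} first;
   None if some step is not well-defined. For i = n-1 it is Some c. *)
definition up_chain :: "nat \<Rightarrow> int list \<Rightarrow> nat \<Rightarrow> int list option" where
  "up_chain n c i = fold (\<lambda>k oc. Option.bind oc (\<lambda>x. up_opt n x k)) (rev [i + 1..<n]) (Some c)"

end

theory Submission
  imports Defs
begin

(* The chain up_{i+1}, ..., up_{n-1} only raises entries at positions > i, so c' agrees with c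
   up to position i and dominates it componentwise; hence the dual diagram of c' is bounded by
   that of c beyond position i + 1. If c_i < 0, setting the i-th entry of c' to 0 is always
   allowed. If c_i >= 0, pick t0 > c_i witnessing that up_i(c) is defined, and let F be the least
   f >= i + t0 such that k + u'_k <= f for every k in (i, f]. Raising u'_i to F - i keeps a
   Tamari interval diagram: a position k < i whose arc reaches i reaches i + t0 in the witness
   diagram, hence reaches F; the interval condition at b <= i + t0 is inherited from the witness;
   and for b > i + t0 minimality of F yields k in (i, b) with k + u'_k >= b, whose own interval
   condition bounds v'_b. *)

definition reach_closed :: "(nat \<Rightarrow> int) \<Rightarrow> nat \<Rightarrow> nat \<Rightarrow> bool" where
  "reach_closed u i f \<longleftrightarrow> (\<forall>k. i < k \<and> k \<le> f \<longrightarrow> int k + u k \<le> int f)"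

lemma tamari_diagram_reach_closed_end:
  assumes "tamari_diagram n u"
  shows "reach_closed u i n"
  unfolding reach_closed_def
proof (intro allI impI)
  fix k assume "i < k \<and> k \<le> n"
  then have "u k \<le> int n - int k" using assms unfolding tamari_diagram_def by auto
  then show "int k + u k \<le> int n" by simp
qed

lemma tamari_diagram_reach_closed:
  assumes u: "tamari_diagram n u" and k: "k \<in> {1..n}" "k \<le> i"
  shows "reach_closed u i (k + nat (u k))"
  unfolding reach_closed_def
proof (intro allI impI)
  fix m assume m: "i < m \<and> m \<le> k + nat (u k)"
  have "0 \<le> u k" using u k unfolding tamari_diagram_def by auto
  then have "int (m - k) \<le> u k" using m k by auto
  then have "u (k + (m - k)) \<le> u k - int (m - k)"
    using u k unfolding tamari_diagram_def by blast
  then show "int m + u m \<le> int (k + nat (u k))" using m k by auto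
qed

lemma tamari_interval_diagram_raise:
  assumes D: "tamari_interval_diagram n u v" and i: "1 \<le> i" "i \<le> F" "F \<le> n"
    and closed: "reach_closed u i F"
    and outer: "\<And>k. 1 \<le> k \<Longrightarrow> k < i \<Longrightarrow> int (i - k) \<le> u k \<Longrightarrow> int F \<le> int k + u k"
    and v_small: "\<And>b. i < b \<Longrightarrow> b \<le> F \<Longrightarrow> v b < int (b - i)"
  shows "tamari_interval_diagram n (u(i := int (F - i))) v"
proof -
  let ?U = "u(i := int (F - i))"
  have bound: "\<And>k. k \<in> {1..n} \<Longrightarrow> 0 \<le> u k \<and> u k \<le> int n - int k"
    and nest: "\<And>k j. k \<in> {1..n} \<Longrightarrow> int j \<le> u k \<Longrightarrow> u (k + j) \<le> u k - int j"
    and inter: "\<And>a b. 1 \<le> a \<Longrightarrow> a < b \<Longrightarrow> b \<le> n \<Longrightarrow> int (b - a) \<le> u a \<Longrightarrow> v b < int (b - a)"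
    using D unfolding tamari_interval_diagram_def tamari_diagram_def by auto
  have "tamari_diagram n ?U"
    unfolding tamari_diagram_def
  proof (intro conjI ballI allI impI)
    fix k assume "k \<in> {1..n}"
    then show "0 \<le> ?U k" "?U k \<le> int n - int k" using bound i by auto
  next
    fix k j assume k: "k \<in> {1..n}" and j: "int j \<le> ?U k"
    consider "k = i" | "k \<noteq> i" "k + j = i" | "k \<noteq> i" "k + j \<noteq> i" by blast
    then show "?U (k + j) \<le> ?U k - int j"
    proof cases
      case 1
      show ?thesis
      proof (cases "j = 0")
        case False
        have "i + j \<le> F" using j i 1 by auto
        then have "int (i + j) + u (i + j) \<le> int F"
          using closed False unfolding reach_closed_def by (metis less_add_same_cancel1 not_gr0)
        then show ?thesis using 1 False i by auto
      qed (simp add: 1)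
    next
      case 2
      then show ?thesis using outer[of k] j k i by auto
    next
      case 3
      then show ?thesis using nest[OF k, of j] j by auto
    qed
  qed
  moreover have "v b < int (b - a)"
    if "1 \<le> a" "a < b" "b \<le> n" "int (b - a) \<le> ?U a" for a b
    using that inter[of a b] v_small[of b] i by (cases "a = i") auto
  ultimately show ?thesis using D unfolding tamari_interval_diagram_def by blast
qed

lemma tamari_interval_diagram_raise_exists:
  assumes D: "tamari_interval_diagram n u v" and D0: "tamari_interval_diagram n u0 v0"
    and i: "1 \<le> i" "i \<le> n"
    and agree: "\<And>k. k < i \<Longrightarrow> u0 k = u k" and v_le: "\<And>j. i < j \<Longrightarrow> v j \<le> v0 j"
  shows "\<exists>T::nat. u0 i \<le> int T \<and> tamari_interval_diagram n (u(i := int T)) v"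
proof -
  have u: "tamari_diagram n u" and u0: "tamari_diagram n u0"
    using D D0 unfolding tamari_interval_diagram_def by auto
  have inter: "\<And>a b. 1 \<le> a \<Longrightarrow> a < b \<Longrightarrow> b \<le> n \<Longrightarrow> int (b - a) \<le> u a \<Longrightarrow> v b < int (b - a)"
    and inter0: "\<And>b. i < b \<Longrightarrow> b \<le> n \<Longrightarrow> int (b - i) \<le> u0 i \<Longrightarrow> v0 b < int (b - i)"
    using D D0 i unfolding tamari_interval_diagram_def by auto
  have u0_i: "0 \<le> u0 i" "u0 i \<le> int n - int i" using u0 i unfolding tamari_diagram_def by auto
  define e where "e = i + nat (u0 i)"
  define F where "F = (LEAST f. e \<le> f \<and> reach_closed u i f)"
  have "e \<le> n \<and> reach_closed u i n"
    using u0_i tamari_diagram_reach_closed_end[OF u] unfolding e_def by auto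
  then have eF: "e \<le> F" and closed: "reach_closed u i F" and "F \<le> n"
    and F_least: "\<And>f. f < F \<Longrightarrow> e \<le> f \<Longrightarrow> \<not> reach_closed u i f"
    unfolding F_def by (auto intro: LeastI2 Least_le dest: not_less_Least)
  have "tamari_interval_diagram n (u(i := int (F - i))) v"
  proof (rule tamari_interval_diagram_raise[OF D i(1) _ \<open>F \<le> n\<close> closed])
    show "i \<le> F" using eF unfolding e_def by simp
  next
    fix k assume k: "1 \<le> k" "k < i" "int (i - k) \<le> u k"
    then have "k \<in> {1..n}" "int (i - k) \<le> u0 k" using agree[of k] i by auto
    then have "u0 (k + (i - k)) \<le> u0 k - int (i - k)"
      using u0 unfolding tamari_diagram_def by blast
    then have "e \<le> k + nat (u k)" using k agree[of k] unfolding e_def by auto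
    moreover have "reach_closed u i (k + nat (u k))"
      using tamari_diagram_reach_closed[OF u] k i by auto
    ultimately have "F \<le> k + nat (u k)" using F_least not_le by blast
    then show "int F \<le> int k + u k" using k by auto
  next
    fix b assume b: "i < b" "b \<le> F"
    show "v b < int (b - i)"
    proof (cases "b \<le> e")
      case True
      then show ?thesis using inter0[of b] v_le[of b] b \<open>F \<le> n\<close> unfolding e_def by force
    next
      case False
      then have "\<not> reach_closed u i (b - 1)" using F_least[of "b - 1"] b by auto
      then obtain k where k: "i < k" "k \<le> b - 1" "int (b - 1) < int k + u k"
        unfolding reach_closed_def by auto
      then have "v b < int (b - k)" using inter[of k b] b i \<open>F \<le> n\<close> by auto
      then show ?thesis using k by auto
    qed
  qed
  moreover have "u0 i \<le> int (F - i)" using eF u0_i unfolding e_def by auto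
  ultimately show ?thesis by blast
qed

lemma tamari_interval_diagram_zero_at:
  assumes "tamari_interval_diagram n u v"
  shows "tamari_interval_diagram n (u(i := 0)) (v(i + 1 := 0))"
  using assms
  unfolding tamari_interval_diagram_def tamari_diagram_def dual_tamari_diagram_def by auto

lemma u_of_list_update:
  assumes "length x = n - 1" "1 \<le> i" "i \<le> n - 1"
  shows "u_of n (x[i - 1 := t]) = (u_of n x)(i := max t 0)"
  using assms by (auto simp: u_of_def fun_eq_iff nth_list_update)

lemma v_of_list_update:
  assumes "length x = n - 1" "1 \<le> i" "i \<le> n - 1"
  shows "v_of n (x[i - 1 := t]) = (v_of n x)(i + 1 := \<bar>min t 0\<bar>)"
  using assms by (auto simp: v_of_def fun_eq_iff nth_list_update)

lemma cubic_coordinate_list_update: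
  assumes "length x = n - 1" "1 \<le> i" "i \<le> n - 1"
  shows "cubic_coordinate n (x[i - 1 := t]) \<longleftrightarrow>
    tamari_interval_diagram n ((u_of n x)(i := max t 0)) ((v_of n x)(i + 1 := \<bar>min t 0\<bar>))"
  using assms unfolding cubic_coordinate_def u_of_list_update[OF assms] v_of_list_update[OF assms]
  by auto

lemma v_of_antimono:
  assumes "\<And>m. m < n - 1 \<Longrightarrow> x ! m \<le> y ! m"
  shows "v_of n y j \<le> v_of n x j"
proof (cases "2 \<le> j \<and> j \<le> n")
  case True
  then have "j - 2 < n - 1" by arith
  then have "x ! (j - 2) \<le> y ! (j - 2)" by (rule assms)
  then show ?thesis by (auto simp: v_of_def)
qed (auto simp: v_of_def)

lemma LeastI_int_bounded_below:
  fixes P :: "int \<Rightarrow> bool"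
  assumes "P y" and bounded: "\<And>x. P x \<Longrightarrow> a \<le> x"
  shows "P (LEAST x. P x)"
proof -
  define Q where "Q m \<longleftrightarrow> P (a + int m)" for m :: nat
  have "Q (nat (y - a))" unfolding Q_def using assms by auto
  then have Q_least: "Q (LEAST m. Q m)" by (rule LeastI)
  define z where "z = a + int (LEAST m. Q m)"
  have "P z" using Q_least unfolding Q_def z_def .
  moreover have "z \<le> x" if "P x" for x
  proof -
    have "Q (nat (x - a))" unfolding Q_def using that bounded[OF that] by auto
    then have "(LEAST m. Q m) \<le> nat (x - a)" by (rule Least_le)
    then show "z \<le> x" unfolding z_def using bounded[OF that] by linarith
  qed
  ultimately have "(LEAST x. P x) = z" by (rule Least_equality)
  with \<open>P z\<close> show ?thesis by simp
qed

lemma up_eq_list_update: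
  assumes "up_defined n x k"
  obtains t where "x ! (k - 1) < t" "up n x k = x[k - 1 := t]" "cubic_coordinate n (up n x k)"
proof -
  let ?P = "\<lambda>t. x ! (k - 1) < t \<and> cubic_coordinate n (x[k - 1 := t])"
  from assms obtain t where "?P t" unfolding up_defined_def by blast
  then have "?P (LEAST t. ?P t)" by (rule LeastI_int_bounded_below[where a = "x ! (k - 1)"]) auto
  then show ?thesis using that unfolding up_def by auto
qed

lemma fold_up_opt_None:
  "fold (\<lambda>k oc. Option.bind oc (\<lambda>x. up_opt n x k)) ks None = None"
  by (induction ks) auto

lemma fold_up_opt_Some:
  assumes "\<forall>k\<in>set ks. i < k"
    and "fold (\<lambda>k oc. Option.bind oc (\<lambda>x. up_opt n x k)) ks (Some x) = Some y"
    and "cubic_coordinate n x"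
  shows "cubic_coordinate n y \<and> length y = length x \<and> (\<forall>m<i. y ! m = x ! m)
    \<and> (\<forall>m<length x. x ! m \<le> y ! m)"
  using assms
proof (induction ks arbitrary: x)
  case Nil
  then show ?case by auto
next
  case (Cons k ks)
  have defined: "up_defined n x k"
    using Cons.prems fold_up_opt_None[of n ks] by (auto simp: up_opt_def split: if_splits)
  then obtain t where t: "x ! (k - 1) < t" "up n x k = x[k - 1 := t]"
    and cubic: "cubic_coordinate n (up n x k)" by (rule up_eq_list_update)
  have "fold (\<lambda>k oc. Option.bind oc (\<lambda>x. up_opt n x k)) ks (Some (up n x k)) = Some y"
    using Cons.prems defined by (simp add: up_opt_def)
  with Cons.prems cubic have IH: "cubic_coordinate n y \<and> length y = length (up n x k)
      \<and> (\<forall>m<i. y ! m = up n x k ! m) \<and> (\<forall>m<length (up n x k). up n x k ! m \<le> y ! m)"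
    by (intro Cons.IH) auto
  have "i < k" using Cons.prems by simp
  then have "\<forall>m<i. up n x k ! m = x ! m" using t(2) by (auto simp: nth_list_update)
  moreover have "\<forall>m<length x. x ! m \<le> up n x k ! m"
    using t by (metis nth_list_update_eq nth_list_update_neq order.order_iff_strict)
  ultimately show ?case using IH t(2) by (auto intro: order_trans)
qed

lemma up_chain_Some:
  assumes "up_chain n c i = Some c'" and "cubic_coordinate n c"
  shows "cubic_coordinate n c'" "length c' = length c" "\<And>m. m < i \<Longrightarrow> c' ! m = c ! m"
    "\<And>m. m < length c \<Longrightarrow> c ! m \<le> c' ! m"
  using fold_up_opt_Some[of "rev [i + 1..<n]" i n c c'] assms unfolding up_chain_def by auto

theorem lemma4p3:
  fixes n i :: nat and c c' :: "int list"
  assumes "minimal_cellular n c"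
    and "1 \<le> i" and "i \<le> n - 1"
    and "up_chain n c i = Some c'"
  shows "up_defined n c' i"
proof -
  have c: "cubic_coordinate n c" and "up_defined n c i"
    using assms(1-3) unfolding minimal_cellular_def by auto
  then obtain t0 where t0: "c ! (i - 1) < t0" "cubic_coordinate n (c[i - 1 := t0])"
    unfolding up_defined_def by blast
  have len: "length c = n - 1" using c unfolding cubic_coordinate_def by simp
  note c' = up_chain_Some[OF assms(4) c]
  have len': "length c' = n - 1" and c'_i: "c' ! (i - 1) = c ! (i - 1)"
    using c'(2,3) len assms(2) by auto
  have D': "tamari_interval_diagram n (u_of n c') (v_of n c')"
    using c'(1) unfolding cubic_coordinate_def by simp
  note update = cubic_coordinate_list_update[OF _ assms(2,3)]
  show ?thesis
  proof (cases "c ! (i - 1) < 0")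
    case True
    have "cubic_coordinate n (c'[i - 1 := 0])"
      using update[OF len'] tamari_interval_diagram_zero_at[OF D'] by simp
    then show ?thesis unfolding up_defined_def using True c'_i by auto
  next
    case False
    have D0: "tamari_interval_diagram n ((u_of n c)(i := t0)) ((v_of n c)(i + 1 := 0))"
      using update[OF len] t0 False by simp
    have v'_i: "v_of n c' (i + 1) = 0" using assms(2,3) c'_i False by (simp add: v_of_def)
    have "\<And>k. k < i \<Longrightarrow> ((u_of n c)(i := t0)) k = u_of n c' k"
      using c'(3) by (auto simp: u_of_def)
    moreover have "\<And>j. i < j \<Longrightarrow> v_of n c' j \<le> ((v_of n c)(i + 1 := 0)) j"
      using v'_i v_of_antimono[of n c c'] c'(4) len by auto
    moreover have "i \<le> n" using assms(3) by arith
    ultimately obtain T :: nat where T: "t0 \<le> int T"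
      and D: "tamari_interval_diagram n ((u_of n c')(i := int T)) (v_of n c')"
      using tamari_interval_diagram_raise_exists[OF D' D0 assms(2)] by auto
    have "cubic_coordinate n (c'[i - 1 := int T])"
      using update[OF len'] D v'_i by (simp add: fun_upd_idem)
    moreover have "c' ! (i - 1) < int T" using T t0 c'_i by simp
    ultimately show ?thesis unfolding up_defined_def by blast
  qed
qed

end
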